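(* Let $G$ be a group with subgroups $H,J$ such that $H\ne G$, $|J:H\cap J|=2$ and $|H:H\cap J|$ finite; let $g\in J\setminus(H\cap J)$, $K=H\cap H^g$, $\lambda=|K:H\cap J|$, $L=\langle K,g\rangle$, $\Gamma=\mathrm{Cos}(G,H,J)$ and $\Sigma=\mathrm{Cos}(G,H,L)$. Suppose $b$ is an odd integer and $J'$ is a subgroup with $\langle g^b\rangle\le J'\le J$ and $\mu=|J:J'|$ finite. Then $|J':H\cap J'|=2$, $|H:H\cap J'|$ is finite, $\Gamma'=\mathrm{Cos}(G,H,J')$ is $G$-arc-transitive, $\Gamma'$ is a $(G,\mu)$-extender of $\Gamma$, and $\Gamma'$ is a $(G,\lambda\mu)$-extender of $\Sigma$.
   Context: $\mathrm{Cos}(G,H,J)$ (for $H\ne G$, $|J:H\cap J|=2$, $|H:H\cap J|<\infty$) is the graph with vertex set $\{Hx:x\in G\}$, edge set $\{Jy:y\in G\}$, $Hx$ incident with $Jy$ iff $yx^{-1}\in JH$, with $G$ acting by right multiplication; multiple edges are allowed. The $\mu$-extender $\Gamma^{(\mu)}$ of a graph replaces every edge by $\mu$ edges with the same end vertices; $\Gamma'$ is a $(G,\mu)$-extender of $\Gamma$ if $\Gamma'\cong\Gamma^{(\mu)}$ and both are $G$-arc-transitive. *)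

theory Defs
  imports "HOL-Algebra.Algebra"
begin

record ('v, 'e) mgraph =
  mverts :: "'v set"
  medges :: "'e set"
  minc   :: "'v \<Rightarrow> 'e \<Rightarrow> bool"

(* Set of right cosets B x with x in A; |A:B| = card (cosets_in G A B). *)
definition cosets_in :: "('a, 'b) monoid_scheme \<Rightarrow> 'a set \<Rightarrow> 'a set \<Rightarrow> 'a set set" where
  "cosets_in G A B = {B #>\<^bsub>G\<^esub> a | a. a \<in> A}"

definition conj_sub :: "('a, 'b) monoid_scheme \<Rightarrow> 'a set \<Rightarrow> 'a \<Rightarrow> 'a set" where
  "conj_sub G H g = {inv\<^bsub>G\<^esub> g \<otimes>\<^bsub>G\<^esub> h \<otimes>\<^bsub>G\<^esub> g | h. h \<in> H}"

definition Cos :: "('a, 'b) monoid_scheme \<Rightarrow> 'a set \<Rightarrow> 'a set \<Rightarrow> ('a set, 'a set) mgraph" where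
  "Cos G H J = \<lparr> mverts = rcosets\<^bsub>G\<^esub> H, medges = rcosets\<^bsub>G\<^esub> J,
     minc = (\<lambda>V E. \<exists>x\<in>carrier G. \<exists>y\<in>carrier G.
                V = H #>\<^bsub>G\<^esub> x \<and> E = J #>\<^bsub>G\<^esub> y \<and>
                y \<otimes>\<^bsub>G\<^esub> inv\<^bsub>G\<^esub> x \<in> J <#>\<^bsub>G\<^esub> H) \<rparr>"

(* mu-extender: every edge replaced by mu parallel edges *)
definition mext :: "('v, 'e) mgraph \<Rightarrow> nat \<Rightarrow> ('v, 'e \<times> nat) mgraph" where
  "mext \<Gamma> \<mu> = \<lparr> mverts = mverts \<Gamma>, medges = medges \<Gamma> \<times> {..<\<mu>},
     minc = (\<lambda>v ei. minc \<Gamma> v (fst ei)) \<rparr>"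

definition mg_iso :: "('v, 'e) mgraph \<Rightarrow> ('w, 'f) mgraph \<Rightarrow> bool" where
  "mg_iso \<Gamma> \<Delta> \<longleftrightarrow> (\<exists>\<phi> \<psi>. bij_betw \<phi> (mverts \<Gamma>) (mverts \<Delta>) \<and>
      bij_betw \<psi> (medges \<Gamma>) (medges \<Delta>) \<and>
      (\<forall>v\<in>mverts \<Gamma>. \<forall>e\<in>medges \<Gamma>. minc \<Gamma> v e \<longleftrightarrow> minc \<Delta> (\<phi> v) (\<psi> e)))"

definition arcs :: "('v, 'e) mgraph \<Rightarrow> ('v \<times> 'e \<times> 'v) set" where
  "arcs \<Gamma> = {(u, e, v). u \<in> mverts \<Gamma> \<and> v \<in> mverts \<Gamma> \<and> e \<in> medges \<Gamma> \<and> u \<noteq> v \<and>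
                 minc \<Gamma> u e \<and> minc \<Gamma> v e}"

definition arc_transitive ::
  "('a, 'b) monoid_scheme \<Rightarrow> ('a \<Rightarrow> 'v \<Rightarrow> 'v) \<Rightarrow> ('a \<Rightarrow> 'e \<Rightarrow> 'e) \<Rightarrow> ('v, 'e) mgraph \<Rightarrow> bool" where
  "arc_transitive G av ae \<Gamma> \<longleftrightarrow>
     (\<forall>a\<in>carrier G. bij_betw (av a) (mverts \<Gamma>) (mverts \<Gamma>) \<and>
        bij_betw (ae a) (medges \<Gamma>) (medges \<Gamma>) \<and>
        (\<forall>v\<in>mverts \<Gamma>. \<forall>e\<in>medges \<Gamma>. minc \<Gamma> v e \<longleftrightarrow> minc \<Gamma> (av a v) (ae a e))) \<and>
     (\<forall>x\<in>arcs \<Gamma>. \<forall>y\<in>arcs \<Gamma>. \<exists>a\<in>carrier G.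
        (av a (fst x), ae a (fst (snd x)), av a (snd (snd x))) = y)"

definition rmult :: "('a, 'b) monoid_scheme \<Rightarrow> 'a \<Rightarrow> 'a set \<Rightarrow> 'a set" where
  "rmult G a S = S #>\<^bsub>G\<^esub> a"

definition G_arc_transitive_cos :: "('a, 'b) monoid_scheme \<Rightarrow> ('a set, 'a set) mgraph \<Rightarrow> bool" where
  "G_arc_transitive_cos G \<Gamma> \<longleftrightarrow> arc_transitive G (rmult G) (rmult G) \<Gamma>"

definition G_extender ::
  "('a, 'b) monoid_scheme \<Rightarrow> nat \<Rightarrow> ('a set, 'a set) mgraph \<Rightarrow> ('a set, 'a set) mgraph \<Rightarrow> bool" where
  "G_extender G \<mu> \<Gamma>' \<Gamma> \<longleftrightarrow> mg_iso \<Gamma>' (mext \<Gamma> \<mu>) \<and>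
      G_arc_transitive_cos G \<Gamma>' \<and> G_arc_transitive_cos G \<Gamma>"

end

theory Submission
  imports Defs
begin

text \<open>
  If \<open>|J : H \<inter> J| = 2\<close> and \<open>g \<in> J - H\<close>, then \<open>J \<subseteq> H \<union> gH\<close>; hence \<open>g\<^sup>2 \<in> H\<close> and every odd
  power \<open>c = g\<^sup>b\<close> lies in \<open>gH\<close>. Whenever \<open>M \<subseteq> H \<union> cH\<close> with \<open>c \<in> M - H\<close>, the edge \<open>My\<close> of
  \<open>Cos(G,H,M)\<close> joins exactly the vertices \<open>Hy\<close> and \<open>Hc\<^sup>-\<^sup>1y\<close>. So every arc has the form
  \<open>(Hy, My, Hc\<^sup>-\<^sup>1y)\<close> and \<open>G\<close> is arc-transitive; and for a subgroup \<open>A \<le> M\<close> still containing \<open>c\<close>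
  the graph \<open>Cos(G,H,A)\<close> has the same incidence, each edge \<open>My\<close> splitting into the \<open>|M : A|\<close>
  edges \<open>Ay' \<subseteq> My\<close>. This applies to \<open>A = J'\<close> inside \<open>M = J\<close> and inside \<open>M = L\<close>: as \<open>g\<close>
  normalises \<open>K = H \<inter> H\<^sup>g\<close> and \<open>g\<^sup>2 \<in> K\<close>, we get \<open>L \<subseteq> K \<union> gK \<subseteq> H \<union> gH\<close>. Finally
  \<open>|L : J| = \<lambda>\<close>, comparing \<open>|L : H \<inter> J| = |L : K| |K : H \<inter> J| = 2\<lambda>\<close> with
  \<open>|L : J| |J : H \<inter> J| = 2 |L : J|\<close>.
\<close>

section \<open>Indices of subgroups\<close>

lemma ex_bij_betw_fibers:
  assumes "f ` S \<subseteq> T"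
    and "\<And>t. t \<in> T \<Longrightarrow> finite {x \<in> S. f x = t} \<and> card {x \<in> S. f x = t} = n"
  obtains \<psi> where "bij_betw \<psi> S (T \<times> {..<n})" and "\<And>x. x \<in> S \<Longrightarrow> fst (\<psi> x) = f x"
proof -
  have "\<exists>\<beta>. bij_betw \<beta> {x \<in> S. f x = t} {..<n}" if "t \<in> T" for t
    using ex_bij_betw_finite_nat[of "{x \<in> S. f x = t}"] assms(2)[OF that]
    by (auto simp: atLeast0LessThan)
  then obtain \<beta> where \<beta>: "\<And>t. t \<in> T \<Longrightarrow> bij_betw (\<beta> t) {x \<in> S. f x = t} {..<n}"
    by metis
  define \<psi> where "\<psi> x = (f x, \<beta> (f x) x)" for x
  have "bij_betw \<psi> S (T \<times> {..<n})"
  proof (rule bij_betw_imageI)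
    show "inj_on \<psi> S"
    proof (rule inj_onI)
      fix x y assume "x \<in> S" "y \<in> S" "\<psi> x = \<psi> y"
      then have "f y = f x" "\<beta> (f x) x = \<beta> (f x) y" and "f x \<in> T"
        using assms(1) by (auto simp: \<psi>_def)
      with \<open>x \<in> S\<close> \<open>y \<in> S\<close> show "x = y"
        using inj_onD[OF bij_betw_imp_inj_on[OF \<beta>[OF \<open>f x \<in> T\<close>]]] by simp
    qed
    show "\<psi> ` S = T \<times> {..<n}"
    proof
      show "\<psi> ` S \<subseteq> T \<times> {..<n}"
        using assms(1) bij_betwE[OF \<beta>] by (auto simp: \<psi>_def)
      show "T \<times> {..<n} \<subseteq> \<psi> ` S"
      proof clarify
        fix t i assume "t \<in> T" "i < n"
        then have "i \<in> \<beta> t ` {x \<in> S. f x = t}"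
          using bij_betw_imp_surj_on[OF \<beta>[OF \<open>t \<in> T\<close>]] by simp
        then obtain x where "x \<in> S" "f x = t" "\<beta> t x = i" by auto
        then show "(t, i) \<in> \<psi> ` S" by (force simp: \<psi>_def)
      qed
    qed
  qed
  then show ?thesis using that by (simp add: \<psi>_def)
qed

context group begin

lemma inv_mult_cancel [simp]: "x \<in> carrier G \<Longrightarrow> y \<in> carrier G \<Longrightarrow> inv x \<otimes> (x \<otimes> y) = y"
  by (simp add: m_assoc[symmetric])

lemma mult_inv_cancel [simp]: "x \<in> carrier G \<Longrightarrow> y \<in> carrier G \<Longrightarrow> x \<otimes> (inv x \<otimes> y) = y"
  by (simp add: m_assoc[symmetric])

lemma rcos_eq_iff:
  assumes "subgroup S G" "x \<in> carrier G" "y \<in> carrier G"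
  shows "S #> x = S #> y \<longleftrightarrow> x \<otimes> inv y \<in> S"
proof
  assume "S #> x = S #> y"
  then have "x \<in> S #> y" using rcos_self[OF assms(2,1)] by simp
  then show "x \<otimes> inv y \<in> S" using subgroup.rcos_module_imp[OF assms(1) is_group assms(3)] by blast
next
  assume "x \<otimes> inv y \<in> S"
  then have "x \<in> S #> y" using subgroup.rcos_module_rev[OF assms(1) is_group assms(3,2)] by blast
  then show "S #> x = S #> y" using repr_independence[OF _ assms(3,1)] by simp
qed

lemma rcos_eq_self_iff:
  assumes "subgroup S G" "x \<in> carrier G"
  shows "S #> x = S \<longleftrightarrow> x \<in> S"
  using rcos_eq_iff[OF assms one_closed] assms subgroup.subset[OF assms(1)] by simp

lemma l_coset_mem_iff:
  assumes "subgroup S G" "c \<in> carrier G" "x \<in> carrier G"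
  shows "x \<in> c <# S \<longleftrightarrow> inv c \<otimes> x \<in> S"
proof
  assume "x \<in> c <# S"
  then obtain s where "s \<in> S" "x = c \<otimes> s" by (auto simp: l_coset_def)
  then show "inv c \<otimes> x \<in> S"
    using assms(2) subgroup.mem_carrier[OF assms(1)] by (simp add: m_assoc[symmetric])
next
  assume "inv c \<otimes> x \<in> S"
  then show "x \<in> c <# S" by (rule subgroup.lcos_module_rev[OF assms(1) is_group assms(2,3)])
qed

lemma set_mult_rcos_absorb:
  assumes "subgroup A G" "subgroup B G" "A \<subseteq> B" "y \<in> carrier G"
  shows "B <#> (A #> y) = B #> y"
proof -
  have "B <#> A = B"
  proof
    show "B <#> A \<subseteq> B"
      using assms(3) subgroup.m_closed[OF assms(2)] by (auto simp: set_mult_def)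
    show "B \<subseteq> B <#> A"
    proof
      fix x assume "x \<in> B"
      then have "x = x \<otimes> \<one>" using subgroup.mem_carrier[OF assms(2)] by simp
      then show "x \<in> B <#> A"
        using \<open>x \<in> B\<close> subgroup.one_closed[OF assms(1)] by (auto simp: set_mult_def)
    qed
  qed
  then show ?thesis
    using setmult_rcos_assoc subgroup.subset[OF assms(1)] subgroup.subset[OF assms(2)] assms(4)
    by metis
qed

lemma cosets_in_image_set_mult:
  assumes "subgroup A G" "subgroup B G" "A \<subseteq> B" "C \<subseteq> carrier G"
  shows "(\<lambda>Q. B <#> Q) ` cosets_in G C A = cosets_in G C B"
proof -
  have "B <#> (A #> c) = B #> c" if "c \<in> C" for c
    using set_mult_rcos_absorb[OF assms(1-3)] assms(4) that by blast
  then show ?thesis unfolding cosets_in_def by (auto simp: image_iff)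
qed

lemma finite_cosets_in_mono:
  assumes "subgroup A G" "subgroup B G" "A \<subseteq> B" "C \<subseteq> carrier G"
    and "finite (cosets_in G C A)"
  shows "finite (cosets_in G C B)"
  using cosets_in_image_set_mult[OF assms(1-4)] finite_imageI[OF assms(5)] by metis

lemma rcosets_fiber:
  assumes sA: "subgroup A G" and sB: "subgroup B G" and "A \<subseteq> B" and c: "c \<in> carrier G"
  shows "{Q \<in> rcosets A. B <#> Q = B #> c} = (\<lambda>Q. Q #> c) ` cosets_in G B A"
proof (intro equalityI subsetI)
  fix Q assume "Q \<in> {Q \<in> rcosets A. B <#> Q = B #> c}"
  then obtain z where z: "z \<in> carrier G" "Q = A #> z" "B #> z = B #> c"
    using set_mult_rcos_absorb[OF sA sB \<open>A \<subseteq> B\<close>] by (auto simp: RCOSETS_def)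
  then have "z \<otimes> inv c \<in> B" using rcos_eq_iff[OF sB] c by simp
  moreover have "Q = (A #> (z \<otimes> inv c)) #> c"
    using z c subgroup.subset[OF sA] by (simp add: coset_mult_assoc m_assoc)
  ultimately show "Q \<in> (\<lambda>Q. Q #> c) ` cosets_in G B A" by (auto simp: cosets_in_def)
next
  fix Q assume "Q \<in> (\<lambda>Q. Q #> c) ` cosets_in G B A"
  then obtain b where b: "b \<in> B" "Q = (A #> b) #> c" by (auto simp: cosets_in_def)
  then have bc: "b \<in> carrier G" using subgroup.mem_carrier[OF sB] by blast
  have Q: "Q = A #> (b \<otimes> c)" using b bc c subgroup.subset[OF sA] by (simp add: coset_mult_assoc)
  have "B #> (b \<otimes> c) = B #> c" using rcos_eq_iff[OF sB] b bc c by (simp add: m_assoc)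
  then show "Q \<in> {Q \<in> rcosets A. B <#> Q = B #> c}"
    using Q bc c set_mult_rcos_absorb[OF sA sB \<open>A \<subseteq> B\<close>] rcosetsI subgroup.subset[OF sA] by auto
qed

lemma card_rcosets_fiber:
  assumes "subgroup A G" "subgroup B G" "A \<subseteq> B" "c \<in> carrier G"
  shows "finite {Q \<in> rcosets A. B <#> Q = B #> c} \<longleftrightarrow> finite (cosets_in G B A)"
    and "card {Q \<in> rcosets A. B <#> Q = B #> c} = card (cosets_in G B A)"
proof -
  have "inj_on (\<lambda>Q. Q #> c) (cosets_in G B A)"
  proof (rule inj_onI)
    fix Q P assume "Q \<in> cosets_in G B A" "P \<in> cosets_in G B A" and eq: "Q #> c = P #> c"
    then obtain a a' where "a \<in> B" "a' \<in> B" "Q = A #> a" "P = A #> a'"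
      by (auto simp: cosets_in_def)
    then have "Q \<subseteq> carrier G" "P \<subseteq> carrier G"
      using subgroup.subset[OF assms(1)] subgroup.mem_carrier[OF assms(2)] r_coset_subset_G
      by auto
    then show "Q = P"
      using arg_cong[OF eq, of "\<lambda>R. R #> inv c"] assms(4) by (simp add: coset_mult_assoc)
  qed
  then show "finite {Q \<in> rcosets A. B <#> Q = B #> c} \<longleftrightarrow> finite (cosets_in G B A)"
    and "card {Q \<in> rcosets A. B <#> Q = B #> c} = card (cosets_in G B A)"
    unfolding rcosets_fiber[OF assms] by (simp_all add: finite_image_iff card_image)
qed

lemma index_mult:
  assumes sA: "subgroup A G" and sB: "subgroup B G" and sC: "subgroup C G"
    and "A \<subseteq> B" "B \<subseteq> C"
    and fin_CB: "finite (cosets_in G C B)" and fin_BA: "finite (cosets_in G B A)"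
  shows "finite (cosets_in G C A)"
    and "card (cosets_in G C A) = card (cosets_in G C B) * card (cosets_in G B A)"
proof -
  have C: "C \<subseteq> carrier G" using subgroup.subset[OF sC] .
  have image: "(\<lambda>Q. B <#> Q) ` cosets_in G C A \<subseteq> cosets_in G C B"
    using cosets_in_image_set_mult[OF sA sB \<open>A \<subseteq> B\<close> C] by simp
  have fibers: "finite {Q \<in> cosets_in G C A. B <#> Q = D}
      \<and> card {Q \<in> cosets_in G C A. B <#> Q = D} = card (cosets_in G B A)"
    if D: "D \<in> cosets_in G C B" for D
  proof -
    obtain c where c: "c \<in> C" "D = B #> c" using D by (auto simp: cosets_in_def)
    have "(\<lambda>Q. Q #> c) ` cosets_in G B A \<subseteq> cosets_in G C A"
    proof
      fix Q assume "Q \<in> (\<lambda>Q. Q #> c) ` cosets_in G B A"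
      then obtain b where "b \<in> B" "Q = (A #> b) #> c" by (auto simp: cosets_in_def)
      moreover have "b \<otimes> c \<in> C" using \<open>b \<in> B\<close> \<open>B \<subseteq> C\<close> c subgroup.m_closed[OF sC] by blast
      moreover have "(A #> b) #> c = A #> (b \<otimes> c)"
        using C c \<open>b \<in> B\<close> subgroup.subset[OF sA] subgroup.mem_carrier[OF sB]
        by (auto simp: coset_mult_assoc)
      ultimately show "Q \<in> cosets_in G C A" by (auto simp: cosets_in_def)
    qed
    moreover have "cosets_in G C A \<subseteq> rcosets A"
      using C subgroup.subset[OF sA] unfolding cosets_in_def by (blast intro: rcosetsI)
    moreover have "{Q \<in> rcosets A. B <#> Q = D} = (\<lambda>Q. Q #> c) ` cosets_in G B A"
      using rcosets_fiber[OF sA sB \<open>A \<subseteq> B\<close>] c C by blast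
    ultimately have "{Q \<in> cosets_in G C A. B <#> Q = D} = {Q \<in> rcosets A. B <#> Q = D}"
      by (intro Collect_cong) blast
    then show ?thesis using card_rcosets_fiber[OF sA sB \<open>A \<subseteq> B\<close>] c C fin_BA by auto
  qed
  obtain \<psi> where "bij_betw \<psi> (cosets_in G C A) (cosets_in G C B \<times> {..<card (cosets_in G B A)})"
    using ex_bij_betw_fibers[OF image fibers] by blast
  then show "finite (cosets_in G C A)"
    and "card (cosets_in G C A) = card (cosets_in G C B) * card (cosets_in G B A)"
    using fin_CB by (simp_all add: bij_betw_finite bij_betw_same_card card_cartesian_product)
qed

lemma finite_cosets_in_Int:
  assumes sA: "subgroup A G" and sB: "subgroup B G" and sS: "subgroup S G" and "A \<subseteq> B"
    and "finite (cosets_in G B A)"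
  shows "finite (cosets_in G (S \<inter> B) (S \<inter> A))"
proof -
  have sSA: "subgroup (S \<inter> A) G" using subgroups_Inter_pair[OF sS sA] .
  have absorb: "A <#> ((S \<inter> A) #> t) = A #> t" if "t \<in> carrier G" for t
    using set_mult_rcos_absorb[OF sSA sA _ that] by blast
  have "inj_on (\<lambda>Q. A <#> Q) (cosets_in G (S \<inter> B) (S \<inter> A))"
  proof (rule inj_onI)
    fix Q P assume "Q \<in> cosets_in G (S \<inter> B) (S \<inter> A)" "P \<in> cosets_in G (S \<inter> B) (S \<inter> A)"
      and eq: "A <#> Q = A <#> P"
    then obtain s t where st: "s \<in> S \<inter> B" "t \<in> S \<inter> B" "Q = (S \<inter> A) #> s" "P = (S \<inter> A) #> t"
      by (auto simp: cosets_in_def)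
    then have carr: "s \<in> carrier G" "t \<in> carrier G" using subgroup.mem_carrier[OF sB] by auto
    have "s \<otimes> inv t \<in> A" using eq st carr absorb rcos_eq_iff[OF sA] by simp
    moreover have "s \<otimes> inv t \<in> S"
      using st subgroup.m_closed[OF sS] subgroup.m_inv_closed[OF sS] by blast
    ultimately show "Q = P" using st carr rcos_eq_iff[OF sSA] by simp
  qed
  moreover have "(\<lambda>Q. A <#> Q) ` cosets_in G (S \<inter> B) (S \<inter> A) \<subseteq> cosets_in G B A"
    using absorb subgroup.mem_carrier[OF sB] by (auto simp: cosets_in_def)
  ultimately show ?thesis using assms(5) inj_on_finite by blast
qed

lemma card_cosets_in_eq_of_tower:
  assumes sA: "subgroup A G" and sB: "subgroup B G" and sC: "subgroup C G" and sD: "subgroup D G"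
    and "A \<subseteq> B" "B \<subseteq> C" "A \<subseteq> D" "D \<subseteq> C"
    and eq: "card (cosets_in G C B) = card (cosets_in G D A)" and pos: "card (cosets_in G D A) \<noteq> 0"
    and fin_BA: "finite (cosets_in G B A)"
  shows "finite (cosets_in G C D)" and "card (cosets_in G C D) = card (cosets_in G B A)"
proof -
  have fin_CB: "finite (cosets_in G C B)" and fin_DA: "finite (cosets_in G D A)"
    using eq pos by (auto intro: card_ge_0_finite)
  note CA = index_mult[OF sA sB sC \<open>A \<subseteq> B\<close> \<open>B \<subseteq> C\<close> fin_CB fin_BA]
  show fin_CD: "finite (cosets_in G C D)"
    using finite_cosets_in_mono[OF sA sD \<open>A \<subseteq> D\<close> subgroup.subset[OF sC] CA(1)] .
  have "card (cosets_in G C D) * card (cosets_in G D A) = card (cosets_in G C A)"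
    using index_mult(2)[OF sA sD sC \<open>A \<subseteq> D\<close> \<open>D \<subseteq> C\<close> fin_CD fin_DA] by simp
  also have "\<dots> = card (cosets_in G B A) * card (cosets_in G D A)"
    using CA(2) eq by simp
  finally show "card (cosets_in G C D) = card (cosets_in G B A)" using pos by simp
qed

end

section \<open>Subgroups covered by two left cosets of \<open>H\<close>\<close>

definition two_coset_cover :: "('a, 'b) monoid_scheme \<Rightarrow> 'a set \<Rightarrow> 'a set \<Rightarrow> 'a \<Rightarrow> bool" where
  "two_coset_cover G H M c \<longleftrightarrow> c \<in> M \<and> c \<notin> H \<and> M \<subseteq> H \<union> (c <#\<^bsub>G\<^esub> H)"

context group begin

lemma two_coset_cover_iff:
  assumes "subgroup H G" "subgroup M G"
  shows "two_coset_cover G H M c \<longleftrightarrow> c \<in> M \<and> c \<notin> H \<and> (\<forall>m\<in>M. m \<in> H \<or> inv c \<otimes> m \<in> H)"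
  using l_coset_mem_iff[OF assms(1)] subgroup.mem_carrier[OF assms(2)]
  unfolding two_coset_cover_def by blast

lemma two_coset_cover_subgroup:
  "two_coset_cover G H M c \<Longrightarrow> c \<in> A \<Longrightarrow> A \<subseteq> M \<Longrightarrow> two_coset_cover G H A c"
  by (auto simp: two_coset_cover_def)

lemma two_coset_cover_supergroup:
  assumes "two_coset_cover G K M c" "K \<subseteq> H" "c \<notin> H"
  shows "two_coset_cover G H M c"
proof -
  have "c <# K \<subseteq> c <# H" using \<open>K \<subseteq> H\<close> by (auto simp: l_coset_def)
  then show ?thesis using assms unfolding two_coset_cover_def by blast
qed

lemma two_coset_cover_square:
  assumes sH: "subgroup H G" and sM: "subgroup M G" and cover: "two_coset_cover G H M c"
  shows "c \<otimes> c \<in> H"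
proof (rule ccontr)
  have c: "c \<in> M" "c \<notin> H" "c \<in> carrier G"
    using cover subgroup.mem_carrier[OF sM] by (auto simp: two_coset_cover_iff[OF sH sM])
  assume "c \<otimes> c \<notin> H"
  moreover have "c \<otimes> c \<in> M" using c subgroup.m_closed[OF sM] by blast
  ultimately have "inv c \<otimes> (c \<otimes> c) \<in> H" using cover by (auto simp: two_coset_cover_iff[OF sH sM])
  then show False using c by (simp add: m_assoc[symmetric])
qed

lemma two_coset_cover_right:
  assumes sH: "subgroup H G" and sM: "subgroup M G" and cover: "two_coset_cover G H M c"
    and m: "m \<in> M" "m \<notin> H"
  shows "m \<otimes> inv c \<in> H"
proof -
  have c: "c \<in> carrier G" and mc: "m \<in> carrier G"
    using cover m subgroup.mem_carrier[OF sM] by (auto simp: two_coset_cover_def)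
  have "inv m \<notin> H" using m mc subgroup.m_inv_closed[OF sH] by fastforce
  then have "inv c \<otimes> inv m \<in> H"
    using cover m subgroup.m_inv_closed[OF sM] by (auto simp: two_coset_cover_iff[OF sH sM])
  then have "m \<otimes> c \<in> H" using subgroup.m_inv_closed[OF sH] c mc by (fastforce simp: inv_mult_group)
  then have "(m \<otimes> c) \<otimes> inv (c \<otimes> c) \<in> H"
    using two_coset_cover_square[OF assms(1-3)] subgroup.m_closed[OF sH] subgroup.m_inv_closed[OF sH]
    by blast
  then show ?thesis using c mc by (simp add: inv_mult_group m_assoc)
qed

lemma two_coset_cover_of_right:
  assumes sH: "subgroup H G" and sM: "subgroup M G" and c: "c \<in> M" "c \<notin> H"
    and right: "\<And>m. m \<in> M \<Longrightarrow> m \<notin> H \<Longrightarrow> m \<otimes> inv c \<in> H"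
  shows "two_coset_cover G H M c"
proof -
  have cc: "c \<in> carrier G" using c subgroup.mem_carrier[OF sM] by blast
  have cc_H: "c \<otimes> c \<in> H"
  proof (rule ccontr)
    assume "c \<otimes> c \<notin> H"
    then have "(c \<otimes> c) \<otimes> inv c \<in> H" using right c subgroup.m_closed[OF sM] by blast
    then show False using c cc by (simp add: m_assoc)
  qed
  have "inv c \<otimes> m \<in> H" if m: "m \<in> M" "m \<notin> H" for m
  proof -
    have mc: "m \<in> carrier G" using m subgroup.mem_carrier[OF sM] by blast
    have "inv m \<notin> H" using m mc subgroup.m_inv_closed[OF sH] by fastforce
    then have "inv m \<otimes> inv c \<in> H" using right m subgroup.m_inv_closed[OF sM] by blast
    then have "c \<otimes> m \<in> H" using subgroup.m_inv_closed[OF sH] cc mc by (fastforce simp: inv_mult_group)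
    then have "inv (c \<otimes> c) \<otimes> (c \<otimes> m) \<in> H"
      using cc_H subgroup.m_closed[OF sH] subgroup.m_inv_closed[OF sH] by blast
    then show ?thesis using cc mc by (simp add: inv_mult_group m_assoc)
  qed
  then show ?thesis using c by (auto simp: two_coset_cover_iff[OF sH sM])
qed

lemma two_coset_cover_of_index_two:
  assumes sH: "subgroup H G" and sJ: "subgroup J G"
    and two: "card (cosets_in G J (H \<inter> J)) = 2" and g: "g \<in> J" "g \<notin> H"
  shows "two_coset_cover G H J g"
proof (rule two_coset_cover_of_right[OF sH sJ g])
  fix a assume a: "a \<in> J" "a \<notin> H"
  have sHJ: "subgroup (H \<inter> J) G" using subgroups_Inter_pair[OF sH sJ] .
  have carr: "a \<in> carrier G" "g \<in> carrier G" using a g subgroup.mem_carrier[OF sJ] by auto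
  have "H \<inter> J \<in> cosets_in G J (H \<inter> J)" "(H \<inter> J) #> g \<in> cosets_in G J (H \<inter> J)"
    "(H \<inter> J) #> a \<in> cosets_in G J (H \<inter> J)"
    using a g subgroup.one_closed[OF sJ] subgroup.subset[OF sHJ] coset_mult_one
    unfolding cosets_in_def by (metis (mono_tags, lifting) mem_Collect_eq)+
  moreover have "H \<inter> J \<noteq> (H \<inter> J) #> g" "H \<inter> J \<noteq> (H \<inter> J) #> a"
    using rcos_eq_self_iff[OF sHJ] carr a g by auto
  moreover obtain Q1 Q2 where "cosets_in G J (H \<inter> J) = {Q1, Q2}"
    using two unfolding card_2_iff by blast
  ultimately have "(H \<inter> J) #> a = (H \<inter> J) #> g" by (smt (verit) insertE singletonD)
  then show "a \<otimes> inv g \<in> H" using rcos_eq_iff[OF sHJ] carr by simp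
qed

lemma card_cosets_in_two_coset_cover:
  assumes sH: "subgroup H G" and sM: "subgroup M G" and cover: "two_coset_cover G H M c"
  shows "card (cosets_in G M (H \<inter> M)) = 2"
proof -
  have sHM: "subgroup (H \<inter> M) G" using subgroups_Inter_pair[OF sH sM] .
  have c: "c \<in> M" "c \<notin> H" "c \<in> carrier G"
    using cover subgroup.mem_carrier[OF sM] by (auto simp: two_coset_cover_def)
  have "cosets_in G M (H \<inter> M) = {H \<inter> M, (H \<inter> M) #> c}"
  proof (intro equalityI subsetI)
    fix Q assume "Q \<in> cosets_in G M (H \<inter> M)"
    then obtain a where a: "a \<in> M" "Q = (H \<inter> M) #> a" by (auto simp: cosets_in_def)
    have ac: "a \<in> carrier G" using a subgroup.mem_carrier[OF sM] by blast
    show "Q \<in> {H \<inter> M, (H \<inter> M) #> c}"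
    proof (cases "a \<in> H")
      case True
      then show ?thesis using rcos_eq_self_iff[OF sHM ac] a by simp
    next
      case False
      then have "a \<otimes> inv c \<in> H \<inter> M"
        using two_coset_cover_right[OF assms a(1)] a c subgroup.m_closed[OF sM] subgroup.m_inv_closed[OF sM]
        by blast
      then show ?thesis using rcos_eq_iff[OF sHM ac c(3)] a by simp
    qed
  next
    fix Q assume "Q \<in> {H \<inter> M, (H \<inter> M) #> c}"
    moreover have "H \<inter> M = (H \<inter> M) #> \<one>" using subgroup.subset[OF sHM] by simp
    ultimately show "Q \<in> cosets_in G M (H \<inter> M)"
      using c subgroup.one_closed[OF sM] unfolding cosets_in_def by blast
  qed
  moreover have "H \<inter> M \<noteq> (H \<inter> M) #> c" using rcos_eq_self_iff[OF sHM c(3)] c by auto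
  ultimately show ?thesis by simp
qed

lemma two_coset_cover_mult:
  assumes sH: "subgroup H G" and sM: "subgroup M G" and cover: "two_coset_cover G H M c"
    and h: "h \<in> H \<inter> M"
  shows "two_coset_cover G H M (c \<otimes> h)"
proof -
  have c: "c \<in> M" "c \<notin> H" "c \<in> carrier G" and hc: "h \<in> carrier G"
    using cover h subgroup.mem_carrier[OF sM] by (auto simp: two_coset_cover_def)
  have "c \<otimes> h \<in> M" using c h subgroup.m_closed[OF sM] by blast
  moreover have "c \<otimes> h \<notin> H"
  proof
    assume "c \<otimes> h \<in> H"
    then have "(c \<otimes> h) \<otimes> inv h \<in> H" using h subgroup.m_closed[OF sH] subgroup.m_inv_closed[OF sH] by blast
    then show False using c hc by (simp add: m_assoc)
  qed
  moreover have "inv (c \<otimes> h) \<otimes> m \<in> H" if "m \<in> M" "m \<notin> H" for m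
  proof -
    have "inv c \<otimes> m \<in> H" using cover that by (auto simp: two_coset_cover_iff[OF sH sM])
    then have "inv h \<otimes> (inv c \<otimes> m) \<in> H" using h subgroup.m_closed[OF sH] subgroup.m_inv_closed[OF sH] by blast
    then show ?thesis using c hc that subgroup.mem_carrier[OF sM] by (simp add: inv_mult_group m_assoc)
  qed
  ultimately show ?thesis by (auto simp: two_coset_cover_iff[OF sH sM])
qed

lemma two_coset_cover_odd_pow:
  assumes sH: "subgroup H G" and sM: "subgroup M G" and cover: "two_coset_cover G H M c"
    and "odd (b :: int)"
  shows "two_coset_cover G H M (c [^] b)"
proof -
  obtain k where b: "b = 1 + 2 * k" using \<open>odd b\<close> by (metis oddE add.commute)
  have c: "c \<in> M" "c \<in> carrier G" using cover subgroup.mem_carrier[OF sM] by (auto simp: two_coset_cover_def)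
  have "c \<otimes> c \<in> H \<inter> M"
    using two_coset_cover_square[OF assms(1-3)] c subgroup.m_closed[OF sM] by blast
  then have "(c \<otimes> c) [^] k \<in> H \<inter> M"
    using subgroup_int_pow_closed[OF subgroups_Inter_pair[OF sH sM]] by blast
  moreover have "c [^] b = c \<otimes> (c \<otimes> c) [^] k"
  proof -
    have "c [^] (2::int) = c \<otimes> c" using int_pow_mult[OF c(2), of 1 1] c by simp
    then show ?thesis using int_pow_mult[OF c(2), of 1 "2 * k"] int_pow_pow[OF c(2), of 2 k] b c by simp
  qed
  ultimately show ?thesis using two_coset_cover_mult[OF assms(1-3)] by simp
qed

end

section \<open>Coset graphs\<close>

context group begin

lemma Cos_simps [simp]:
  "mverts (Cos G H M) = rcosets H" "medges (Cos G H M) = rcosets M"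
  by (simp_all add: Cos_def)

lemma minc_Cos:
  assumes sH: "subgroup H G" and sM: "subgroup M G" and x: "x \<in> carrier G" and y: "y \<in> carrier G"
  shows "minc (Cos G H M) (H #> x) (M #> y) \<longleftrightarrow> y \<otimes> inv x \<in> M <#> H"
proof
  assume "y \<otimes> inv x \<in> M <#> H"
  then show "minc (Cos G H M) (H #> x) (M #> y)" using x y by (auto simp: Cos_def)
next
  assume "minc (Cos G H M) (H #> x) (M #> y)"
  then obtain x' y' where xy': "x' \<in> carrier G" "y' \<in> carrier G" "H #> x = H #> x'" "M #> y = M #> y'"
    and "y' \<otimes> inv x' \<in> M <#> H"
    by (auto simp: Cos_def)
  then obtain m h where mh: "m \<in> M" "h \<in> H" "y' \<otimes> inv x' = m \<otimes> h" by (auto simp: set_mult_def)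
  have carr: "m \<in> carrier G" "h \<in> carrier G"
    using mh subgroup.mem_carrier[OF sH] subgroup.mem_carrier[OF sM] by auto
  have H: "x' \<otimes> inv x \<in> H" using rcos_eq_iff[OF sH xy'(1) x] xy'(3) by simp
  have M: "y \<otimes> inv y' \<in> M" using rcos_eq_iff[OF sM y xy'(2)] xy'(4) by simp
  have "y \<otimes> inv x = (y \<otimes> inv y') \<otimes> (y' \<otimes> inv x') \<otimes> (x' \<otimes> inv x)"
    using x y xy' by (simp add: m_assoc)
  also have "\<dots> = ((y \<otimes> inv y') \<otimes> m) \<otimes> (h \<otimes> (x' \<otimes> inv x))"
    using mh carr x y xy' by (simp add: m_assoc)
  finally show "y \<otimes> inv x \<in> M <#> H"
    using subgroup.m_closed[OF sM M mh(1)] subgroup.m_closed[OF sH mh(2) H]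
    by (auto simp: set_mult_def)
qed

lemma minc_Cos_two_coset_cover:
  assumes sH: "subgroup H G" and sM: "subgroup M G" and cover: "two_coset_cover G H M c"
    and x: "x \<in> carrier G" and y: "y \<in> carrier G"
  shows "minc (Cos G H M) (H #> x) (M #> y) \<longleftrightarrow> H #> x = H #> y \<or> H #> x = H #> (inv c \<otimes> y)"
proof -
  have c: "c \<in> M" "c \<in> carrier G" using cover subgroup.mem_carrier[OF sM] by (auto simp: two_coset_cover_def)
  have y': "inv c \<otimes> y \<in> carrier G" using c y by simp
  have "y \<otimes> inv x \<in> M <#> H \<longleftrightarrow> y \<otimes> inv x \<in> H \<or> inv c \<otimes> y \<otimes> inv x \<in> H"
  proof
    assume "y \<otimes> inv x \<in> M <#> H"
    then obtain m h where mh: "m \<in> M" "h \<in> H" "y \<otimes> inv x = m \<otimes> h" by (auto simp: set_mult_def)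
    have carr: "m \<in> carrier G" "h \<in> carrier G"
      using mh subgroup.mem_carrier[OF sH] subgroup.mem_carrier[OF sM] by auto
    consider "m \<in> H" | "inv c \<otimes> m \<in> H"
      using cover mh(1) by (auto simp: two_coset_cover_iff[OF sH sM])
    then show "y \<otimes> inv x \<in> H \<or> inv c \<otimes> y \<otimes> inv x \<in> H"
    proof cases
      case 1
      then show ?thesis using mh subgroup.m_closed[OF sH] by auto
    next
      case 2
      have "inv c \<otimes> y \<otimes> inv x = (inv c \<otimes> m) \<otimes> h" using mh carr c x y by (simp add: m_assoc)
      then show ?thesis using 2 mh subgroup.m_closed[OF sH] by auto
    qed
  next
    assume "y \<otimes> inv x \<in> H \<or> inv c \<otimes> y \<otimes> inv x \<in> H"
    moreover have "y \<otimes> inv x = \<one> \<otimes> (y \<otimes> inv x)" "y \<otimes> inv x = c \<otimes> (inv c \<otimes> y \<otimes> inv x)"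
      using x y c by (simp_all add: m_assoc)
    ultimately show "y \<otimes> inv x \<in> M <#> H"
      using c subgroup.one_closed[OF sM] unfolding set_mult_def by blast
  qed
  moreover have "H #> x = H #> y \<longleftrightarrow> y \<otimes> inv x \<in> H"
    using rcos_eq_iff[OF sH y x] by auto
  moreover have "H #> x = H #> (inv c \<otimes> y) \<longleftrightarrow> inv c \<otimes> y \<otimes> inv x \<in> H"
    using rcos_eq_iff[OF sH y' x] by auto
  ultimately show ?thesis using minc_Cos[OF sH sM x y] by simp
qed

lemma rmult_automorphism_Cos:
  assumes sH: "subgroup H G" and sM: "subgroup M G" and a: "a \<in> carrier G"
  shows "bij_betw (rmult G a) (mverts (Cos G H M)) (mverts (Cos G H M)) \<and>
    bij_betw (rmult G a) (medges (Cos G H M)) (medges (Cos G H M)) \<and>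
    (\<forall>v\<in>mverts (Cos G H M). \<forall>e\<in>medges (Cos G H M).
       minc (Cos G H M) v e \<longleftrightarrow> minc (Cos G H M) (rmult G a v) (rmult G a e))"
proof (intro conjI ballI)
  have bij: "bij_betw (rmult G a) (rcosets S) (rcosets S)" if "subgroup S G" for S
  proof (rule bij_betwI[where g = "rmult G (inv a)"])
    have S: "S \<subseteq> carrier G" using subgroup.subset[OF that] .
    have "rmult G b \<in> rcosets S \<rightarrow> rcosets S" if "b \<in> carrier G" for b
      using S that by (auto simp: rmult_def RCOSETS_def coset_mult_assoc)
    then show "rmult G a \<in> rcosets S \<rightarrow> rcosets S" "rmult G (inv a) \<in> rcosets S \<rightarrow> rcosets S"
      using a by auto
    show "rmult G (inv a) (rmult G a V) = V" "rmult G a (rmult G (inv a) V) = V"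
      if "V \<in> rcosets S" for V
      using that S a by (auto simp: rmult_def RCOSETS_def coset_mult_assoc m_assoc)
  qed
  show "bij_betw (rmult G a) (mverts (Cos G H M)) (mverts (Cos G H M))"
    "bij_betw (rmult G a) (medges (Cos G H M)) (medges (Cos G H M))"
    using bij sH sM by simp_all
next
  fix v e assume "v \<in> mverts (Cos G H M)" "e \<in> medges (Cos G H M)"
  then obtain x y where xy: "x \<in> carrier G" "y \<in> carrier G" "v = H #> x" "e = M #> y"
    by (auto simp: RCOSETS_def)
  have "rmult G a v = H #> (x \<otimes> a)" "rmult G a e = M #> (y \<otimes> a)"
    using xy a subgroup.subset[OF sH] subgroup.subset[OF sM] by (auto simp: rmult_def coset_mult_assoc)
  moreover have "(y \<otimes> a) \<otimes> inv (x \<otimes> a) = y \<otimes> inv x" using xy a by (simp add: inv_mult_group m_assoc)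
  ultimately show "minc (Cos G H M) v e \<longleftrightarrow> minc (Cos G H M) (rmult G a v) (rmult G a e)"
    using minc_Cos[OF sH sM] xy a by simp
qed

lemma arcs_Cos_two_coset_cover:
  assumes sH: "subgroup H G" and sM: "subgroup M G" and cover: "two_coset_cover G H M c"
  shows "arcs (Cos G H M) \<subseteq> (\<lambda>y. (H #> y, M #> y, H #> (inv c \<otimes> y))) ` carrier G"
proof
  fix z assume "z \<in> arcs (Cos G H M)"
  then obtain x1 x2 y where z: "z = (H #> x1, M #> y, H #> x2)"
    and carr: "x1 \<in> carrier G" "x2 \<in> carrier G" "y \<in> carrier G" and ne: "H #> x1 \<noteq> H #> x2"
    and inc: "minc (Cos G H M) (H #> x1) (M #> y)" "minc (Cos G H M) (H #> x2) (M #> y)"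
    by (auto simp: arcs_def RCOSETS_def)
  have c: "c \<in> M" "c \<in> carrier G" using cover subgroup.mem_carrier[OF sM] by (auto simp: two_coset_cover_def)
  have ends: "H #> x1 = H #> y \<or> H #> x1 = H #> (inv c \<otimes> y)"
    "H #> x2 = H #> y \<or> H #> x2 = H #> (inv c \<otimes> y)"
    using inc minc_Cos_two_coset_cover[OF sH sM cover] carr by auto
  show "z \<in> (\<lambda>y. (H #> y, M #> y, H #> (inv c \<otimes> y))) ` carrier G"
  proof (cases "H #> x1 = H #> y")
    case True
    then show ?thesis using ends ne z carr by auto
  next
    case False
    \<comment> \<open>the arc runs the other way along the edge, so reparametrise it by \<open>inv c \<otimes> y\<close>\<close>
    have y': "inv c \<otimes> y \<in> carrier G" using c carr by simp
    have "M #> (inv c \<otimes> y) = M #> y"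
      using rcos_eq_iff[OF sM y' carr(3)] c carr subgroup.m_inv_closed[OF sM] by (simp add: m_assoc)
    moreover have "H #> (inv c \<otimes> (inv c \<otimes> y)) = H #> y"
    proof -
      have "inv (c \<otimes> c) \<in> H"
        using two_coset_cover_square[OF sH sM cover] subgroup.m_inv_closed[OF sH] by blast
      then show ?thesis using rcos_eq_iff[OF sH _ carr(3)] c carr by (simp add: inv_mult_group m_assoc)
    qed
    ultimately have "z = (H #> (inv c \<otimes> y), M #> (inv c \<otimes> y), H #> (inv c \<otimes> (inv c \<otimes> y)))"
      using False ends ne z by auto
    then show ?thesis using y' by blast
  qed
qed

lemma arc_transitive_Cos:
  assumes sH: "subgroup H G" and sM: "subgroup M G" and cover: "two_coset_cover G H M c"
  shows "G_arc_transitive_cos G (Cos G H M)"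
  unfolding G_arc_transitive_cos_def arc_transitive_def
proof (intro conjI[OF ballI] ballI)
  show "bij_betw (rmult G a) (mverts (Cos G H M)) (mverts (Cos G H M)) \<and>
    bij_betw (rmult G a) (medges (Cos G H M)) (medges (Cos G H M)) \<and>
    (\<forall>v\<in>mverts (Cos G H M). \<forall>e\<in>medges (Cos G H M).
       minc (Cos G H M) v e \<longleftrightarrow> minc (Cos G H M) (rmult G a v) (rmult G a e))"
    if "a \<in> carrier G" for a
    using rmult_automorphism_Cos[OF sH sM that] .
next
  fix z1 z2 assume "z1 \<in> arcs (Cos G H M)" "z2 \<in> arcs (Cos G H M)"
  then obtain y1 y2 where y: "y1 \<in> carrier G" "y2 \<in> carrier G"
    and z: "z1 = (H #> y1, M #> y1, H #> (inv c \<otimes> y1))" "z2 = (H #> y2, M #> y2, H #> (inv c \<otimes> y2))"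
    using arcs_Cos_two_coset_cover[OF assms] by blast
  have c: "c \<in> carrier G" using cover subgroup.mem_carrier[OF sM] by (auto simp: two_coset_cover_def)
  define a where "a = inv y1 \<otimes> y2"
  have a: "a \<in> carrier G" "y1 \<otimes> a = y2" "inv c \<otimes> y1 \<otimes> a = inv c \<otimes> y2"
    using y c by (simp_all add: a_def m_assoc)
  then show "\<exists>a\<in>carrier G. (rmult G a (fst z1), rmult G a (fst (snd z1)), rmult G a (snd (snd z1))) = z2"
    using y c z subgroup.subset[OF sH] subgroup.subset[OF sM]
    by (auto simp: rmult_def coset_mult_assoc)
qed

lemma mg_iso_Cos_mext:
  assumes sH: "subgroup H G" and sA: "subgroup A G" and sM: "subgroup M G"
    and "A \<subseteq> M" "c \<in> A" and cover: "two_coset_cover G H M c"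
    and fin: "finite (cosets_in G M A)"
  shows "mg_iso (Cos G H A) (mext (Cos G H M) (card (cosets_in G M A)))"
proof -
  define n where "n = card (cosets_in G M A)"
  have absorb: "M <#> (A #> y) = M #> y" if "y \<in> carrier G" for y
    using set_mult_rcos_absorb[OF sA sM \<open>A \<subseteq> M\<close> that] .
  have image: "(\<lambda>Q. M <#> Q) ` (rcosets A) \<subseteq> rcosets M"
    using absorb subgroup.subset[OF sM] by (auto simp: RCOSETS_def)
  have fibers: "finite {Q \<in> rcosets A. M <#> Q = t} \<and> card {Q \<in> rcosets A. M <#> Q = t} = n"
    if t: "t \<in> rcosets M" for t
  proof -
    obtain y where "y \<in> carrier G" "t = M #> y" using t by (auto simp: RCOSETS_def)
    then show ?thesis using card_rcosets_fiber[OF sA sM \<open>A \<subseteq> M\<close>] fin n_def by simp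
  qed
  obtain \<psi> where \<psi>: "bij_betw \<psi> (rcosets A) ((rcosets M) \<times> {..<n})"
    and fst_\<psi>: "\<And>Q. Q \<in> rcosets A \<Longrightarrow> fst (\<psi> Q) = M <#> Q"
    using ex_bij_betw_fibers[OF image fibers] by blast
  have cover_A: "two_coset_cover G H A c"
    using two_coset_cover_subgroup[OF cover \<open>c \<in> A\<close> \<open>A \<subseteq> M\<close>] .
  show ?thesis unfolding mg_iso_def n_def[symmetric]
  proof (intro exI[of _ id] exI[of _ \<psi>] conjI ballI)
    show "bij_betw id (mverts (Cos G H A)) (mverts (mext (Cos G H M) n))"
      by (simp add: mext_def)
    show "bij_betw \<psi> (medges (Cos G H A)) (medges (mext (Cos G H M) n))"
      using \<psi> by (simp add: mext_def)
  next
    fix v Q assume "v \<in> mverts (Cos G H A)" "Q \<in> medges (Cos G H A)"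
    then obtain x y where xy: "x \<in> carrier G" "y \<in> carrier G" "v = H #> x" "Q = A #> y"
      by (auto simp: RCOSETS_def)
    then have "fst (\<psi> Q) = M #> y" using fst_\<psi> absorb subgroup.subset[OF sA] rcosetsI by simp
    then show "minc (Cos G H A) v Q \<longleftrightarrow> minc (mext (Cos G H M) n) (id v) (\<psi> Q)"
      using minc_Cos_two_coset_cover[OF sH sA cover_A] minc_Cos_two_coset_cover[OF sH sM cover] xy
      by (simp add: mext_def)
  qed
qed

lemma G_extender_Cos:
  assumes "subgroup H G" "subgroup A G" "subgroup M G"
    and "A \<subseteq> M" "c \<in> A" "two_coset_cover G H M c" "finite (cosets_in G M A)"
  shows "G_extender G (card (cosets_in G M A)) (Cos G H A) (Cos G H M)"
  unfolding G_extender_def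
  using mg_iso_Cos_mext[OF assms] arc_transitive_Cos[OF assms(1,3,6)]
    arc_transitive_Cos[OF assms(1,2) two_coset_cover_subgroup[OF assms(6,5,4)]]
  by blast

end

section \<open>The subgroup generated by \<open>H \<inter> H\<^sup>g\<close> and \<open>g\<close>\<close>

context group begin

lemma conj_sub_mem_iff:
  assumes sH: "subgroup H G" and g: "g \<in> carrier G"
  shows "x \<in> conj_sub G H g \<longleftrightarrow> x \<in> carrier G \<and> g \<otimes> x \<otimes> inv g \<in> H"
proof
  assume "x \<in> conj_sub G H g"
  then obtain h where h: "h \<in> H" "x = inv g \<otimes> h \<otimes> g" by (auto simp: conj_sub_def)
  moreover have "h \<in> carrier G" using h subgroup.mem_carrier[OF sH] by blast
  ultimately show "x \<in> carrier G \<and> g \<otimes> x \<otimes> inv g \<in> H" using g by (simp add: m_assoc)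
next
  assume x: "x \<in> carrier G \<and> g \<otimes> x \<otimes> inv g \<in> H"
  then have "x = inv g \<otimes> (g \<otimes> x \<otimes> inv g) \<otimes> g" using g by (simp add: m_assoc)
  then show "x \<in> conj_sub G H g" using x unfolding conj_sub_def by blast
qed

lemma subgroup_conj_sub:
  assumes sH: "subgroup H G" and g: "g \<in> carrier G"
  shows "subgroup (conj_sub G H g) G"
proof -
  note mem = conj_sub_mem_iff[OF sH g]
  show ?thesis
  proof (rule subgroupI)
    show "conj_sub G H g \<subseteq> carrier G" using mem by blast
    show "conj_sub G H g \<noteq> {}" using mem[of \<one>] g subgroup.one_closed[OF sH] by auto
  next
    fix a assume "a \<in> conj_sub G H g"
    then have a: "a \<in> carrier G" "g \<otimes> a \<otimes> inv g \<in> H" using mem by auto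
    have "g \<otimes> inv a \<otimes> inv g = inv (g \<otimes> a \<otimes> inv g)" using a g by (simp add: inv_mult_group m_assoc)
    then show "inv a \<in> conj_sub G H g" using mem a subgroup.m_inv_closed[OF sH] by auto
  next
    fix a b assume "a \<in> conj_sub G H g" "b \<in> conj_sub G H g"
    then have a: "a \<in> carrier G" "g \<otimes> a \<otimes> inv g \<in> H" and b: "b \<in> carrier G" "g \<otimes> b \<otimes> inv g \<in> H"
      using mem by auto
    have "g \<otimes> (a \<otimes> b) \<otimes> inv g = (g \<otimes> a \<otimes> inv g) \<otimes> (g \<otimes> b \<otimes> inv g)"
      using a b g by (simp add: m_assoc)
    then show "a \<otimes> b \<in> conj_sub G H g" using mem a b subgroup.m_closed[OF sH] by auto
  qed
qed

lemma conj_mem_Int_conj_sub: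
  assumes sH: "subgroup H G" and g: "g \<in> carrier G" and gg: "g \<otimes> g \<in> H"
    and x: "x \<in> H \<inter> conj_sub G H g"
  shows "inv g \<otimes> x \<otimes> g \<in> H \<inter> conj_sub G H g"
proof -
  note mem = conj_sub_mem_iff[OF sH g]
  have xc: "x \<in> carrier G" and gx: "g \<otimes> x \<otimes> inv g \<in> H" using x mem by auto
  have "inv (g \<otimes> g) \<otimes> (g \<otimes> x \<otimes> inv g) \<otimes> (g \<otimes> g) \<in> H"
    using gx gg subgroup.m_closed[OF sH] subgroup.m_inv_closed[OF sH] by blast
  moreover have "inv (g \<otimes> g) \<otimes> (g \<otimes> x \<otimes> inv g) \<otimes> (g \<otimes> g) = inv g \<otimes> x \<otimes> g"
    using xc g by (simp add: inv_mult_group m_assoc)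
  moreover have "g \<otimes> (inv g \<otimes> x \<otimes> g) \<otimes> inv g = x" using xc g by (simp add: m_assoc)
  ultimately show ?thesis using mem x xc g by simp
qed

lemma Int_subset_Int_conj_sub:
  assumes sH: "subgroup H G" and sJ: "subgroup J G" and cover: "two_coset_cover G H J g"
  shows "H \<inter> J \<subseteq> H \<inter> conj_sub G H g"
proof
  fix t assume t: "t \<in> H \<inter> J"
  have g: "g \<in> J" "g \<notin> H" "g \<in> carrier G" and tc: "t \<in> carrier G"
    using cover t subgroup.mem_carrier[OF sJ] by (auto simp: two_coset_cover_def)
  have "g \<otimes> t \<otimes> inv g \<in> J" using t g subgroup.m_closed[OF sJ] subgroup.m_inv_closed[OF sJ] by blast
  moreover have "inv g \<otimes> (g \<otimes> t \<otimes> inv g) \<notin> H"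
  proof
    assume "inv g \<otimes> (g \<otimes> t \<otimes> inv g) \<in> H"
    then have "t \<otimes> inv g \<in> H" using tc g by (simp add: m_assoc)
    then have "inv t \<otimes> (t \<otimes> inv g) \<in> H"
      using t subgroup.m_closed[OF sH] subgroup.m_inv_closed[OF sH] by blast
    then have "inv g \<in> H" using tc g by simp
    then show False using g subgroup.m_inv_closed[OF sH] by fastforce
  qed
  ultimately have "g \<otimes> t \<otimes> inv g \<in> H" using cover by (auto simp: two_coset_cover_iff[OF sH sJ])
  then show "t \<in> H \<inter> conj_sub G H g" using conj_sub_mem_iff[OF sH g(3)] t tc by simp
qed

lemma generate_Un_singleton_subset:
  assumes sK: "subgroup K G" and g: "g \<in> carrier G" and gg: "g \<otimes> g \<in> K"
    and conj: "\<And>x. x \<in> K \<Longrightarrow> inv g \<otimes> x \<otimes> g \<in> K"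
  shows "generate G (K \<union> {g}) \<subseteq> K \<union> (g <# K)"
proof
  have Kc: "K \<subseteq> carrier G" using subgroup.subset[OF sK] .
  fix m assume "m \<in> generate G (K \<union> {g})"
  then have "m \<in> carrier G \<and> (m \<in> K \<or> inv g \<otimes> m \<in> K)"
  proof (induction m rule: generate.induct)
    case one
    then show ?case using subgroup.one_closed[OF sK] by simp
  next
    case (incl h)
    then show ?case using Kc g subgroup.one_closed[OF sK] by auto
  next
    case (inv h)
    have "inv g \<otimes> inv g \<in> K" using subgroup.m_inv_closed[OF sK gg] g by (simp add: inv_mult_group)
    with inv show ?case using Kc g subgroup.m_inv_closed[OF sK] by (auto simp: m_assoc)
  next
    case (eng h1 h2)
    have carr: "h1 \<in> carrier G" "h2 \<in> carrier G" using eng.IH by auto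
    \<comment> \<open>write each factor as \<open>k\<close> or \<open>g \<otimes> k\<close> and move every \<open>g\<close> to the left through \<open>K\<close>\<close>
    consider "h1 \<in> K" "h2 \<in> K" | "h1 \<in> K" "inv g \<otimes> h2 \<in> K"
      | "inv g \<otimes> h1 \<in> K" "h2 \<in> K" | "inv g \<otimes> h1 \<in> K" "inv g \<otimes> h2 \<in> K"
      using eng.IH by blast
    then have "h1 \<otimes> h2 \<in> K \<or> inv g \<otimes> (h1 \<otimes> h2) \<in> K"
    proof cases
      case 1
      then show ?thesis using subgroup.m_closed[OF sK] by blast
    next
      case 2
      have "(inv g \<otimes> h1 \<otimes> g) \<otimes> (inv g \<otimes> h2) = inv g \<otimes> (h1 \<otimes> h2)" using carr g by (simp add: m_assoc)
      then show ?thesis using 2 conj subgroup.m_closed[OF sK] by metis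
    next
      case 3
      have "(inv g \<otimes> h1) \<otimes> h2 = inv g \<otimes> (h1 \<otimes> h2)" using carr g by (simp add: m_assoc)
      then show ?thesis using 3 subgroup.m_closed[OF sK] by metis
    next
      case 4
      have "(g \<otimes> g) \<otimes> (inv g \<otimes> (inv g \<otimes> h1) \<otimes> g) \<otimes> (inv g \<otimes> h2) = h1 \<otimes> h2"
        using carr g by (simp add: m_assoc)
      then show ?thesis using 4 gg conj subgroup.m_closed[OF sK] by metis
    qed
    then show ?case using carr by simp
  qed
  then show "m \<in> K \<union> (g <# K)" using l_coset_mem_iff[OF sK g] by blast
qed

lemma subset_of_two_coset_cover:
  assumes sH: "subgroup H G" and sJ: "subgroup J G" and sL: "subgroup L G"
    and cover: "two_coset_cover G H J g" and "H \<inter> J \<subseteq> L" and "g \<in> L"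
  shows "J \<subseteq> L"
proof
  fix a assume a: "a \<in> J"
  have g: "g \<in> J" "g \<in> carrier G" and ac: "a \<in> carrier G"
    using cover a subgroup.mem_carrier[OF sJ] by (auto simp: two_coset_cover_def)
  show "a \<in> L"
  proof (cases "a \<in> H")
    case True
    then show ?thesis using a \<open>H \<inter> J \<subseteq> L\<close> by blast
  next
    case False
    then have "inv g \<otimes> a \<in> H \<inter> J"
      using cover a g subgroup.m_closed[OF sJ] subgroup.m_inv_closed[OF sJ]
      by (auto simp: two_coset_cover_iff[OF sH sJ])
    then have "g \<otimes> (inv g \<otimes> a) \<in> L" using \<open>H \<inter> J \<subseteq> L\<close> \<open>g \<in> L\<close> subgroup.m_closed[OF sL] by blast
    then show ?thesis using ac g by simp
  qed
qed

lemma two_coset_cover_generate_Int_conj_sub: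
  assumes sH: "subgroup H G" and sJ: "subgroup J G" and cover: "two_coset_cover G H J g"
  shows "two_coset_cover G (H \<inter> conj_sub G H g) (generate G (H \<inter> conj_sub G H g \<union> {g})) g"
proof -
  define K where "K = H \<inter> conj_sub G H g"
  have g: "g \<notin> H" "g \<in> carrier G"
    using cover subgroup.mem_carrier[OF sJ] by (auto simp: two_coset_cover_def)
  have sK: "subgroup K G" unfolding K_def using subgroups_Inter_pair[OF sH subgroup_conj_sub[OF sH g(2)]] .
  have gg: "g \<otimes> g \<in> H" using two_coset_cover_square[OF sH sJ cover] .
  then have "g \<otimes> g \<in> K" using g conj_sub_mem_iff[OF sH g(2)] by (simp add: K_def m_assoc)
  then have "generate G (K \<union> {g}) \<subseteq> K \<union> (g <# K)"
    using generate_Un_singleton_subset[OF sK g(2)] conj_mem_Int_conj_sub[OF sH g(2) gg] K_def by blast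
  moreover have "g \<in> generate G (K \<union> {g})" by (simp add: generate.incl)
  moreover have "g \<notin> K" using g K_def by blast
  ultimately show ?thesis unfolding two_coset_cover_def K_def by blast
qed

lemma index_generate_Int_conj_sub:
  assumes sH: "subgroup H G" and sJ: "subgroup J G" and cover: "two_coset_cover G H J g"
    and fin: "finite (cosets_in G H (H \<inter> J))"
  defines "K \<equiv> H \<inter> conj_sub G H g"
  defines "L \<equiv> generate G (K \<union> {g})"
  shows "subgroup L G" and "two_coset_cover G H L g" and "J \<subseteq> L"
    and "finite (cosets_in G L J)" and "card (cosets_in G L J) = card (cosets_in G K (H \<inter> J))"
proof -
  have g: "g \<in> carrier G" "g \<notin> H"
    using cover subgroup.mem_carrier[OF sJ] by (auto simp: two_coset_cover_def)
  have sK: "subgroup K G" unfolding K_def using subgroups_Inter_pair[OF sH subgroup_conj_sub[OF sH g(1)]] .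
  have "K \<union> {g} \<subseteq> carrier G" using subgroup.subset[OF sK] g by blast
  then show sL: "subgroup L G" unfolding L_def by (rule generate_is_subgroup)
  have sHJ: "subgroup (H \<inter> J) G" using subgroups_Inter_pair[OF sH sJ] .
  have cover_KL: "two_coset_cover G K L g"
    unfolding K_def L_def using two_coset_cover_generate_Int_conj_sub[OF sH sJ cover] .
  moreover have "K \<subseteq> H" unfolding K_def by blast
  ultimately show "two_coset_cover G H L g" using g(2) by (rule two_coset_cover_supergroup)
  have "K \<subseteq> L" "g \<in> L" unfolding L_def by (auto intro: generate.incl)
  moreover have "H \<inter> J \<subseteq> K" unfolding K_def using Int_subset_Int_conj_sub[OF sH sJ cover] .
  ultimately show "J \<subseteq> L" using subset_of_two_coset_cover[OF sH sJ sL cover] by blast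
  have "K \<inter> L = K" using \<open>K \<subseteq> L\<close> by blast
  then have "card (cosets_in G L K) = card (cosets_in G J (H \<inter> J))"
    using card_cosets_in_two_coset_cover[OF sK sL cover_KL] card_cosets_in_two_coset_cover[OF sH sJ cover]
    by simp
  moreover have "cosets_in G K (H \<inter> J) \<subseteq> cosets_in G H (H \<inter> J)"
    unfolding K_def cosets_in_def by blast
  then have "finite (cosets_in G K (H \<inter> J))" using fin finite_subset by blast
  ultimately show "finite (cosets_in G L J)" and "card (cosets_in G L J) = card (cosets_in G K (H \<inter> J))"
    using card_cosets_in_eq_of_tower[OF sHJ sK sL sJ \<open>H \<inter> J \<subseteq> K\<close> \<open>K \<subseteq> L\<close> _ \<open>J \<subseteq> L\<close>]
      card_cosets_in_two_coset_cover[OF sH sJ cover]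
    by auto
qed

end

theorem lemma2p9:
  fixes G :: "('a, 'c) monoid_scheme" and H J J' :: "'a set" and g :: 'a and b :: int
  assumes "group G"
    and "subgroup H G" and "subgroup J G"
    and "H \<noteq> carrier G"
    and "card (cosets_in G J (H \<inter> J)) = 2"
    and "finite (cosets_in G H (H \<inter> J))"
    and "g \<in> J" and "g \<notin> H \<inter> J"
    and "odd b"
    and "subgroup J' G"
    and "generate G {g [^]\<^bsub>G\<^esub> b} \<subseteq> J'" and "J' \<subseteq> J"
    and "finite (cosets_in G J J')"
  shows "let K = H \<inter> conj_sub G H g;
             lam = card (cosets_in G K (H \<inter> J));
             L = generate G (K \<union> {g});
             \<mu> = card (cosets_in G J J')
         in card (cosets_in G J' (H \<inter> J')) = 2
          \<and> finite (cosets_in G H (H \<inter> J'))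
          \<and> G_arc_transitive_cos G (Cos G H J')
          \<and> G_extender G \<mu> (Cos G H J') (Cos G H J)
          \<and> G_extender G (lam * \<mu>) (Cos G H J') (Cos G H L)"
proof -
  interpret group G by fact
  note sH = \<open>subgroup H G\<close> and sJ = \<open>subgroup J G\<close> and sJ' = \<open>subgroup J' G\<close>
  define K where "K = H \<inter> conj_sub G H g"
  define L where "L = generate G (K \<union> {g})"
  define c where "c = g [^]\<^bsub>G\<^esub> b"
  have "two_coset_cover G H J g"
    using two_coset_cover_of_index_two[OF sH sJ] assms(5,7,8) by blast
  note L = index_generate_Int_conj_sub[OF sH sJ this assms(6), folded K_def L_def]
  have cover_L: "two_coset_cover G H L c"
    unfolding c_def using two_coset_cover_odd_pow[OF sH L(1,2) \<open>odd b\<close>] .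
  have c_J': "c \<in> J'" using assms(11) generate.incl[of c "{c}"] c_def by blast
  have J'_L: "J' \<subseteq> L" using \<open>J' \<subseteq> J\<close> L(3) by blast
  have cover_J: "two_coset_cover G H J c"
    using two_coset_cover_subgroup[OF cover_L _ L(3)] c_J' \<open>J' \<subseteq> J\<close> by blast
  have cover_J': "two_coset_cover G H J' c"
    using two_coset_cover_subgroup[OF cover_L c_J' J'_L] .
  note index_L = index_mult[OF sJ' sJ L(1) \<open>J' \<subseteq> J\<close> L(3,4) assms(13)]
  have "finite (cosets_in G H (H \<inter> J'))"
    using index_mult(1)[OF subgroups_Inter_pair[OF sH sJ'] subgroups_Inter_pair[OF sH sJ] sH _ _ assms(6)]
      finite_cosets_in_Int[OF sJ' sJ sH \<open>J' \<subseteq> J\<close> assms(13)] \<open>J' \<subseteq> J\<close>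
    by blast
  moreover have "card (cosets_in G L J') = card (cosets_in G K (H \<inter> J)) * card (cosets_in G J J')"
    using index_L(2) L(5) by simp
  ultimately show ?thesis
    unfolding Let_def K_def[symmetric] L_def[symmetric]
    using card_cosets_in_two_coset_cover[OF sH sJ' cover_J'] arc_transitive_Cos[OF sH sJ' cover_J']
      G_extender_Cos[OF sH sJ' sJ \<open>J' \<subseteq> J\<close> c_J' cover_J assms(13)]
      G_extender_Cos[OF sH sJ' L(1) J'_L c_J' cover_L index_L(1)]
    by simp
qed

end
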